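(* Let $S$ be a set of pairwise disjoint line segments in the plane in general position, $H\subset S$, and $s_1,s_2\in S\setminus H$ distinct. There is an unbounded Voronoi edge in $\mathcal{V}_{|H|+1}(S)$ separating the regions $V_{|H|+1}(H\cup\{s_1\},S)$ and $V_{|H|+1}(H\cup\{s_2\},S)$ if and only if there exists a supporting halfplane of $s_1,s_2$ and $H$.
   Context: Distances are Euclidean: $d(x,s)=\min_{q\in s}d(x,q)$. For $|H'|=k$, $V_k(H',S)=\{x : d(x,s)<d(x,t)\ \forall s\in H',\ \forall t\in S\setminus H'\}$, and $\mathcal{V}_k(S)$ is the partition of the plane into these regions. A supporting halfplane of $s_1,s_2\notin H$ and $H$ is an open halfplane $h$ whose boundary line passes through at least one endpoint of $s_1$ and at least one endpoint of $s_2$, such that $h$ intersects all segments of $H$ and no segment of $S\setminus H$. General position: no more than three segments touch the same circle and no more than two endpoints are collinear. *)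

theory Defs
  imports "HOL-Analysis.Analysis"
begin

type_synonym point = "real^2"

definition is_segment :: "point set \<Rightarrow> bool" where
  "is_segment s \<longleftrightarrow> (\<exists>a b. a \<noteq> b \<and> s = closed_segment a b)"

definition endpoints :: "point set \<Rightarrow> point set" where
  "endpoints s = {p. \<exists>q. p \<noteq> q \<and> s = closed_segment p q}"

definition segdist :: "point \<Rightarrow> point set \<Rightarrow> real" where
  "segdist x s = infdist x s"

definition voronoi_region :: "point set set \<Rightarrow> point set set \<Rightarrow> point set" where
  "voronoi_region H' S = {x. \<forall>s\<in>H'. \<forall>t\<in>S - H'. segdist x s < segdist x t}"

text \<open>Points of the common boundary of two regions R1, R2 near which only
  these two regions occur; the Voronoi edges separating R1 and R2 are the
  connected components of this set.\<close>
definition edge_points :: "point set \<Rightarrow> point set \<Rightarrow> point set" where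
  "edge_points R1 R2 = {x. x \<in> closure R1 \<and> x \<in> closure R2 \<and>
      (\<exists>e>0. ball x e \<subseteq> closure R1 \<union> closure R2)}"

definition has_unbounded_edge :: "point set \<Rightarrow> point set \<Rightarrow> bool" where
  "has_unbounded_edge R1 R2 \<longleftrightarrow> (\<exists>C\<in>components (edge_points R1 R2). \<not> bounded C)"

definition pairwise_disjoint_segments :: "point set set \<Rightarrow> bool" where
  "pairwise_disjoint_segments S \<longleftrightarrow>
     (\<forall>s\<in>S. is_segment s) \<and> (\<forall>s\<in>S. \<forall>t\<in>S. s \<noteq> t \<longrightarrow> s \<inter> t = {})"

definition touches_circle :: "point set \<Rightarrow> point \<Rightarrow> real \<Rightarrow> bool" where
  "touches_circle s c r \<longleftrightarrow> s \<inter> sphere c r \<noteq> {} \<and> s \<inter> ball c r = {}"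

definition general_position :: "point set set \<Rightarrow> bool" where
  "general_position S \<longleftrightarrow>
     (\<forall>c r. r > 0 \<longrightarrow> card {s\<in>S. touches_circle s c r} \<le> 3) \<and>
     (\<forall>p\<in>\<Union>(endpoints ` S). \<forall>q\<in>\<Union>(endpoints ` S). \<forall>u\<in>\<Union>(endpoints ` S).
        p \<noteq> q \<and> p \<noteq> u \<and> q \<noteq> u \<longrightarrow> \<not> collinear {p, q, u})"

definition supporting_halfplane ::
  "point set set \<Rightarrow> point set set \<Rightarrow> point set \<Rightarrow> point set \<Rightarrow> point set \<Rightarrow> bool" where
  "supporting_halfplane S H s1 s2 h \<longleftrightarrow>
     (\<exists>a b. a \<noteq> 0 \<and> h = {x. a \<bullet> x > b} \<and>
        (\<exists>p\<in>endpoints s1. a \<bullet> p = b) \<and> (\<exists>q\<in>endpoints s2. a \<bullet> q = b)) \<and>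
     (\<forall>s\<in>H. h \<inter> s \<noteq> {}) \<and> (\<forall>t\<in>S - H. h \<inter> t = {})"

end

theory Submission
  imports Defs
begin

(* Both directions of the theorem are proved by looking at the Voronoi diagram
   "from infinity".  The support function  support s u = sup {u . x | x in s}
   of a segment governs distances of far-away points: if |x| is large and x
   points in direction u, then  d(x,s) = |x| - support s u + o(1).

   Forward direction: an unbounded edge contains points y_n escaping to
   infinity in some limiting direction u.  Since y_n lies in the closures of
   both regions, comparing distances in the limit orders the supports:
   support s1 u = support s2 u =: beta, the segments of H have support >= beta
   and all others <= beta; general position makes the inequalities for H
   strict, so  {x. u . x > beta}  is a supporting halfplane.

   Backward direction: given a supporting halfplane {x. a . x > b} touching s1
   at the endpoint p and s2 at q, consider the ray  m + t a  from the midpoint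
   m of p and q.  Far out on the ray, uniformly in a neighbourhood, p and q are
   the nearest points of s1 and s2, every segment of H is closer and every
   other segment farther ("local bisector configuration").  Hence the bisector
   of p and q near the ray separates the two regions, the ray lies in the
   common edge, and that edge is unbounded. *)

lemma endpoints_closed_segment:
  assumes "a \<noteq> b"
  shows "a \<in> endpoints (closed_segment a b)" "b \<in> endpoints (closed_segment a b)"
  unfolding endpoints_def
  using assms closed_segment_commute[of a b] by (blast, metis (mono_tags, lifting) mem_Collect_eq)

lemma endpoint_in_segment: "p \<in> endpoints s \<Longrightarrow> p \<in> s"
  unfolding endpoints_def by auto

lemma endpoints_other:
  assumes "p \<in> endpoints s"
  obtains q where "q \<in> endpoints s" "q \<noteq> p" "s = closed_segment p q"
proof -
  from assms obtain q where "p \<noteq> q" "s = closed_segment p q" unfolding endpoints_def by auto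
  then show ?thesis using that endpoints_closed_segment(2)[of p q] by auto
qed

lemma collinear_on_line:
  fixes u x y z :: "real^2"
  assumes "u \<noteq> 0" "u \<bullet> x = c" "u \<bullet> y = c" "u \<bullet> z = c"
  shows "collinear {x, y, z}"
proof -
  have "aff_dim {x, y, z} \<le> aff_dim {x. u \<bullet> x = c}"
    by (rule aff_dim_subset) (use assms in auto)
  also have "\<dots> = 1" using assms(1) by simp
  finally show ?thesis by (simp add: collinear_aff_dim)
qed

lemma general_position_line:
  assumes "general_position S" "a \<noteq> 0"
    and "p \<in> \<Union>(endpoints ` S)" "q \<in> \<Union>(endpoints ` S)" "e \<in> \<Union>(endpoints ` S)"
    and "p \<noteq> q" "e \<noteq> p" "e \<noteq> q" "a \<bullet> p = b" "a \<bullet> q = b"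
  shows "a \<bullet> e \<noteq> b"
proof
  assume "a \<bullet> e = b"
  then have "collinear {e, p, q}" using collinear_on_line[OF assms(2)] assms(9,10) by blast
  then show False using assms(1,3-8) unfolding general_position_def by blast
qed

lemma pairwise_disjoint_segmentsD:
  assumes "pairwise_disjoint_segments S"
  shows "s \<in> S \<Longrightarrow> is_segment s" "s \<in> S \<Longrightarrow> t \<in> S \<Longrightarrow> s \<noteq> t \<Longrightarrow> s \<inter> t = {}"
  using assms unfolding pairwise_disjoint_segments_def by blast+

lemma segment_compact_nonempty: "is_segment s \<Longrightarrow> compact s \<and> s \<noteq> {}"
  unfolding is_segment_def by auto

definition support :: "point set \<Rightarrow> point \<Rightarrow> real" where
  "support s v = Sup ((\<lambda>q. v \<bullet> q) ` s)"

lemma inner_closed_segment_le: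
  fixes v a b :: "'a::real_inner"
  assumes "q \<in> closed_segment a b"
  shows "v \<bullet> q \<le> max (v \<bullet> a) (v \<bullet> b)"
proof -
  obtain t where t: "0 \<le> t" "t \<le> 1" "q = (1 - t) *\<^sub>R a + t *\<^sub>R b"
    using assms by (auto simp: in_segment)
  have "v \<bullet> q = (1 - t) * (v \<bullet> a) + t * (v \<bullet> b)" using t by (simp add: inner_add_right)
  also have "\<dots> \<le> (1 - t) * max (v \<bullet> a) (v \<bullet> b) + t * max (v \<bullet> a) (v \<bullet> b)"
    by (intro add_mono mult_left_mono) (use t in auto)
  finally show ?thesis by (simp add: algebra_simps)
qed

lemma support_closed_segment: "support (closed_segment a b) v = max (v \<bullet> a) (v \<bullet> b)"
  unfolding support_def
  by (rule cSup_eq_maximum) (use inner_closed_segment_le[of _ a b v] in \<open>auto simp: max_def\<close>)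

lemma support_upper: "is_segment s \<Longrightarrow> r \<in> s \<Longrightarrow> v \<bullet> r \<le> support s v"
  unfolding is_segment_def using inner_closed_segment_le support_closed_segment by metis

lemma support_attained:
  assumes "is_segment s"
  shows "\<exists>e\<in>endpoints s. v \<bullet> e = support s v"
proof -
  obtain a b where ab: "a \<noteq> b" "s = closed_segment a b" using assms unfolding is_segment_def by blast
  show ?thesis using endpoints_closed_segment[OF ab(1)] ab(2) support_closed_segment[of a b v]
    by (cases "v \<bullet> a \<le> v \<bullet> b") (auto simp: max_def)
qed

lemma dist_far_lower:
  fixes x r :: "'a::real_inner"
  assumes "x \<noteq> 0"
  shows "norm x - (x /\<^sub>R norm x) \<bullet> r \<le> dist x r"
proof -
  have "(x /\<^sub>R norm x) \<bullet> (x - r) \<le> norm (x /\<^sub>R norm x) * norm (x - r)" by (rule norm_cauchy_schwarz)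
  also have "\<dots> = dist x r" using assms by (simp add: dist_norm)
  finally have 1: "(x /\<^sub>R norm x) \<bullet> (x - r) \<le> dist x r" .
  have "(x /\<^sub>R norm x) \<bullet> x = norm x" using assms
    by (simp add: power2_norm_eq_inner[symmetric] power2_eq_square)
  then show ?thesis using 1 by (simp add: inner_diff_right)
qed

lemma dist_far_upper:
  fixes x e :: "'a::real_inner" and n :: nat
  assumes M: "norm e \<le> M" and x: "norm x \<ge> M + real n + 1"
  shows "dist x e \<le> norm x - (x /\<^sub>R norm x) \<bullet> e + M^2 * inverse (real (Suc n))"
proof -
  have M0: "M \<ge> 0" using M norm_ge_zero order_trans by blast
  have x0: "x \<noteq> 0" using x M0 by auto
  define v where "v = x /\<^sub>R norm x"
  define R where "R = norm x"
  have nv: "norm v = 1" using x0 by (simp add: v_def)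
  have ve: "v \<bullet> e \<le> M" using norm_cauchy_schwarz[of v e] nv M by simp
  define A where "A = R - v \<bullet> e"
  have An: "A \<ge> real n + 1" using x ve by (simp add: A_def R_def)
  have Apos: "A > 0" using An by linarith
  have xv: "x = R *\<^sub>R v" using x0 by (simp add: v_def R_def)
  have vv: "v \<bullet> v = 1" using nv by (metis norm_eq_1)
  have "(dist x e)^2 = (R *\<^sub>R v - e) \<bullet> (R *\<^sub>R v - e)"
    by (simp add: dist_norm power2_norm_eq_inner xv[symmetric])
  also have "\<dots> = R^2 * (v \<bullet> v) - 2 * R * (v \<bullet> e) + e \<bullet> e"
    by (simp add: inner_diff_left inner_diff_right inner_commute power2_eq_square algebra_simps)
  also have "\<dots> = A^2 + (e \<bullet> e - (v \<bullet> e)^2)" using vv by (simp add: A_def power2_eq_square algebra_simps)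
  also have "\<dots> \<le> A^2 + M^2"
  proof -
    have "e \<bullet> e \<le> M^2" using M norm_ge_zero power_mono power2_norm_eq_inner by metis
    then show ?thesis by (smt (verit) zero_le_power2)
  qed
  also have "\<dots> \<le> (A + M^2 / A)^2"
  proof -
    have "(A + M^2 / A)^2 = A^2 + 2 * M^2 + (M^2 / A)^2"
      using Apos by (simp add: power2_eq_square field_simps)
    then show ?thesis by (smt (verit) zero_le_power2)
  qed
  finally have "dist x e \<le> A + M^2 / A"
    by (rule power2_le_imp_le) (use Apos in simp)
  also have "M^2 / A \<le> M^2 * inverse (real (Suc n))"
    using An by (simp add: divide_inverse le_imp_inverse_le mult_left_mono)
  finally show ?thesis by (simp add: A_def R_def v_def)
qed

lemma inner_le_support_limit:
  fixes y :: "nat \<Rightarrow> real^2"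
  assumes y: "\<forall>n. norm (y n) \<ge> M + real n + 1" and lim: "(\<lambda>n. y n /\<^sub>R norm (y n)) \<longlonglongrightarrow> u"
    and closer: "\<forall>n. infdist (y n) s \<le> infdist (y n) t"
    and s: "is_segment s" and e: "e \<in> t" "norm e \<le> M"
  shows "u \<bullet> e \<le> support s u"
proof -
  obtain a b where ab: "a \<noteq> b" "s = closed_segment a b" using s unfolding is_segment_def by blast
  define v where "v n = y n /\<^sub>R norm (y n)" for n
  have M0: "M \<ge> 0" using e norm_ge_zero order_trans by blast
  have bound: "v n \<bullet> e \<le> max (v n \<bullet> a) (v n \<bullet> b) + M^2 * inverse (real (Suc n))" for n
  proof -
    have y0: "y n \<noteq> 0" using y[rule_format, of n] M0 by auto
    obtain r where r: "r \<in> s" "infdist (y n) s = dist (y n) r"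
      using infdist_attains_inf[of s "y n"] ab by auto
    have "norm (y n) - max (v n \<bullet> a) (v n \<bullet> b) \<le> norm (y n) - v n \<bullet> r"
      using inner_closed_segment_le[of r a b "v n"] r ab by simp
    also have "\<dots> \<le> infdist (y n) s" using dist_far_lower[OF y0] r(2) by (simp add: v_def)
    also have "\<dots> \<le> infdist (y n) t" using closer by simp
    also have "\<dots> \<le> dist (y n) e" using infdist_le[OF e(1)] .
    also have "\<dots> \<le> norm (y n) - v n \<bullet> e + M^2 * inverse (real (Suc n))"
      unfolding v_def by (rule dist_far_upper[OF e(2)]) (use y in simp)
    finally show ?thesis by simp
  qed
  have "(\<lambda>n. v n \<bullet> e) \<longlonglongrightarrow> u \<bullet> e"
    by (intro tendsto_intros lim[folded v_def])
  moreover have "(\<lambda>n. max (v n \<bullet> a) (v n \<bullet> b) + M^2 * inverse (real (Suc n)))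
      \<longlonglongrightarrow> max (u \<bullet> a) (u \<bullet> b) + M^2 * 0"
    by (intro tendsto_intros lim[folded v_def] LIMSEQ_inverse_real_of_nat)
  ultimately have "u \<bullet> e \<le> max (u \<bullet> a) (u \<bullet> b) + M^2 * 0"
    by (rule LIMSEQ_le) (use bound in blast)
  then show ?thesis using ab(2) support_closed_segment by simp
qed

lemma support_le_limit:
  fixes y :: "nat \<Rightarrow> real^2"
  assumes y: "\<forall>n. norm (y n) \<ge> M + real n + 1" and lim: "(\<lambda>n. y n /\<^sub>R norm (y n)) \<longlonglongrightarrow> u"
    and closer: "\<forall>n. infdist (y n) s \<le> infdist (y n) t"
    and s: "is_segment s" and t: "is_segment t" and tM: "\<forall>e\<in>t. norm e \<le> M"
  shows "support t u \<le> support s u"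
proof -
  obtain c d where cd: "c \<noteq> d" "t = closed_segment c d" using t unfolding is_segment_def by blast
  have "u \<bullet> c \<le> support s u" "u \<bullet> d \<le> support s u"
    using inner_le_support_limit[OF y lim closer s, of c] inner_le_support_limit[OF y lim closer s, of d]
      cd tM by auto
  then show ?thesis using cd support_closed_segment by simp
qed

lemma unbounded_escape_direction:
  fixes C :: "'a::euclidean_space set"
  assumes "\<not> bounded C" "M \<ge> 0"
  obtains y u where "\<forall>n. y n \<in> C" "\<forall>n. norm (y n) \<ge> M + real n + 1" "u \<noteq> 0"
    "(\<lambda>n. y n /\<^sub>R norm (y n)) \<longlonglongrightarrow> u"
proof -
  have "\<forall>n::nat. \<exists>x\<in>C. norm x > M + real n + 1"
    using assms(1) unfolding bounded_iff by (meson not_le)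
  then obtain x where x: "\<forall>n. x n \<in> C \<and> norm (x n) > M + real n + 1" by metis
  define v where "v n = x n /\<^sub>R norm (x n)" for n
  have "x n \<noteq> 0" for n using x assms(2) by (metis norm_zero not_less of_nat_0_le_iff add_nonneg_nonneg zero_le_one)
  then have "v n \<in> sphere 0 1" for n by (simp add: v_def)
  then obtain u r where u: "u \<in> sphere 0 1" "strict_mono r" "(v \<circ> r) \<longlonglongrightarrow> u"
    using compact_imp_seq_compact[OF compact_sphere[of 0 1]] unfolding seq_compact_def by metis
  have "norm (x (r n)) \<ge> M + real n + 1" for n
    using seq_suble[OF u(2), of n] x by (smt (verit) of_nat_le_iff)
  moreover have "u \<noteq> 0" using u(1) by auto
  ultimately show ?thesis
    using that[of "x \<circ> r" u] x u(3) by (auto simp: v_def comp_def)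
qed

lemma closure_voronoi_region_le:
  assumes "x \<in> closure (voronoi_region H' S)" "s \<in> H'" "t \<in> S - H'"
  shows "infdist x s \<le> infdist x t"
proof -
  have "closure (voronoi_region H' S) \<subseteq> {x. infdist x s \<le> infdist x t}"
  proof (rule closure_minimal)
    show "voronoi_region H' S \<subseteq> {x. infdist x s \<le> infdist x t}"
      using assms(2,3) by (auto simp: voronoi_region_def segdist_def intro: less_imp_le)
  qed (intro closed_Collect_le continuous_intros)
  then show ?thesis using assms(1) by auto
qed

(* Ordered supports in direction u yield a supporting halfplane; general
   position turns the weak inequalities for H into strict ones. *)
lemma supporting_halfplane_from_support:
  assumes pds: "pairwise_disjoint_segments S" and gp: "general_position S" and HS: "H \<subseteq> S"
    and s1: "s1 \<in> S - H" and s2: "s2 \<in> S - H" and ne: "s1 \<noteq> s2" and u0: "u \<noteq> 0"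
    and sup1: "support s1 u = \<beta>" and sup2: "support s2 u = \<beta>"
    and supH: "\<forall>s\<in>H. \<beta> \<le> support s u" and supS: "\<forall>t\<in>S - H. support t u \<le> \<beta>"
  shows "supporting_halfplane S H s1 s2 {x. \<beta> < u \<bullet> x}"
proof -
  note seg = pairwise_disjoint_segmentsD(1)[OF pds] and disj = pairwise_disjoint_segmentsD(2)[OF pds]
  obtain p where p: "p \<in> endpoints s1" "u \<bullet> p = \<beta>" using support_attained[OF seg, of s1 u] s1 sup1 by auto
  obtain q where q: "q \<in> endpoints s2" "u \<bullet> q = \<beta>" using support_attained[OF seg, of s2 u] s2 sup2 by auto
  have pq: "p \<noteq> q" using p q endpoint_in_segment disj[of s1 s2] s1 s2 ne by blast
  have above: "\<exists>e\<in>s. \<beta> < u \<bullet> e" if s: "s \<in> H" for s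
  proof -
    have sS: "s \<in> S" using s HS by blast
    obtain e where e: "e \<in> endpoints s" "u \<bullet> e = support s u" using support_attained[OF seg[OF sS]] by blast
    have es: "e \<in> s" using e endpoint_in_segment by blast
    have "e \<noteq> p" "e \<noteq> q"
      using es p q endpoint_in_segment disj[OF sS, of s1] disj[OF sS, of s2] s s1 s2 by blast+
    then have "support s u \<noteq> \<beta>"
      using general_position_line[OF gp u0, of p q e \<beta>] e p q pq sS s1 s2 by auto
    then show ?thesis using supH s e es by force
  qed
  have below: "u \<bullet> r \<le> \<beta>" if "t \<in> S - H" "r \<in> t" for t r
    using support_upper[OF seg, of t r u] supS that by force
  show ?thesis
    unfolding supporting_halfplane_def
  proof (intro conjI exI ballI)
    show "\<exists>p\<in>endpoints s1. u \<bullet> p = \<beta>" "\<exists>q\<in>endpoints s2. u \<bullet> q = \<beta>" using p q by blast+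
    show "{x. \<beta> < u \<bullet> x} \<inter> s \<noteq> {}" if "s \<in> H" for s using above[OF that] by blast
    show "{x. \<beta> < u \<bullet> x} \<inter> t = {}" if "t \<in> S - H" for t using below[OF that] by force
  qed (use u0 in auto)
qed

lemma unbounded_edge_imp_supporting_halfplane:
  assumes fin: "finite S" and pds: "pairwise_disjoint_segments S" and gp: "general_position S"
    and HS: "H \<subseteq> S" and s1: "s1 \<in> S - H" and s2: "s2 \<in> S - H" and ne: "s1 \<noteq> s2"
    and edge: "has_unbounded_edge (voronoi_region (insert s1 H) S) (voronoi_region (insert s2 H) S)"
  shows "\<exists>h. supporting_halfplane S H s1 s2 h"
proof -
  define R1 where "R1 = voronoi_region (insert s1 H) S"
  define R2 where "R2 = voronoi_region (insert s2 H) S"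
  note seg = pairwise_disjoint_segmentsD(1)[OF pds]
  obtain C where C: "C \<in> components (edge_points R1 R2)" "\<not> bounded C"
    using edge unfolding has_unbounded_edge_def R1_def R2_def by blast
  have in_closures: "x \<in> closure R1 \<and> x \<in> closure R2" if "x \<in> C" for x
    using in_components_subset[OF C(1)] that unfolding edge_points_def by blast
  have "bounded s" if "s \<in> S" for s using segment_compact_nonempty[OF seg[OF that]] compact_imp_bounded by blast
  then have "bounded (\<Union>S)" using fin by (intro bounded_Union) auto
  then obtain M where M: "M > 0" "\<forall>x\<in>\<Union>S. norm x \<le> M" unfolding bounded_pos by blast
  obtain y u where yC: "\<forall>n. y n \<in> C" and yM: "\<forall>n. norm (y n) \<ge> M + real n + 1" and u0: "u \<noteq> 0"
    and ylim: "(\<lambda>n. y n /\<^sub>R norm (y n)) \<longlonglongrightarrow> u"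
    by (rule unbounded_escape_direction[OF C(2) less_imp_le[OF M(1)]])
  have le: "support t u \<le> support s u"
    if "s \<in> S" "t \<in> S" "\<forall>n. infdist (y n) s \<le> infdist (y n) t" for s t
    using support_le_limit[OF yM ylim that(3) seg seg] M(2) that(1,2) by blast
  have closer1: "\<forall>n. infdist (y n) s \<le> infdist (y n) t" if "s \<in> insert s1 H" "t \<in> S - insert s1 H" for s t
    using closure_voronoi_region_le[OF _ that] in_closures yC unfolding R1_def by blast
  have closer2: "\<forall>n. infdist (y n) s \<le> infdist (y n) t" if "s \<in> insert s2 H" "t \<in> S - insert s2 H" for s t
    using closure_voronoi_region_le[OF _ that] in_closures yC unfolding R2_def by blast
  have s1S: "s1 \<in> S" and s2S: "s2 \<in> S" and s2_out: "s2 \<in> S - insert s1 H" and s1_out: "s1 \<in> S - insert s2 H"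
    using s1 s2 ne by auto
  have "support s2 u \<le> support s1 u" by (rule le[OF s1S s2S closer1[OF insertI1 s2_out]])
  moreover have "support s1 u \<le> support s2 u" by (rule le[OF s2S s1S closer2[OF insertI1 s1_out]])
  ultimately have sup12: "support s2 u = support s1 u" by simp
  have supH: "support s1 u \<le> support s u" if "s \<in> H" for s
    using HS that by (intro le[OF _ s1S closer2[OF insertI2[OF that] s1_out]]) auto
  have supS: "support t u \<le> support s1 u" if t: "t \<in> S - H" for t
  proof (cases "t = s1 \<or> t = s2")
    case False
    then have "t \<in> S - insert s1 H" using t by simp
    then show ?thesis using t by (intro le[OF s1S _ closer1[OF insertI1]]) auto
  qed (use sup12 in auto)
  show ?thesis
    using supporting_halfplane_from_support[OF pds gp HS s1 s2 ne u0 refl sup12] supH supS by blast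
qed

lemma dist_sq_diff:
  fixes y r q :: "'a::real_inner"
  shows "(dist y r)^2 - (dist y q)^2 = r \<bullet> r - q \<bullet> q - 2 * (y \<bullet> (r - q))"
  by (simp add: dist_norm power2_norm_eq_inner inner_diff_left inner_diff_right inner_commute algebra_simps)

lemma eventually_closer_along_ray:
  fixes a q0 m :: "'a::real_inner" and A :: "'a set"
  assumes "bounded A" "\<forall>r\<in>A. a \<bullet> r \<le> c" "a \<bullet> q0 > c"
  shows "eventually (\<lambda>t. \<forall>z\<in>ball (m + t *\<^sub>R a) \<rho>. \<forall>r\<in>A. dist z q0 < dist z r) at_top"
proof -
  obtain B0 where B0: "\<forall>r\<in>A. norm r \<le> B0" using assms(1) bounded_iff by blast
  define B where "B = max B0 (norm q0)"
  define K where "K = norm m + \<rho>"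
  define \<delta> where "\<delta> = a \<bullet> q0 - c"
  have \<delta>: "\<delta> > 0" using assms(3) by (simp add: \<delta>_def)
  have B: "B \<ge> 0" "norm q0 \<le> B" "\<forall>r\<in>A. norm r \<le> B" using B0 by (auto simp: B_def le_max_iff_disj)
  define T where "T = max 0 ((B * B + 4 * K * B) / (2 * \<delta>)) + 1"
  show ?thesis
    unfolding eventually_at_top_linorder
  proof (intro exI[of _ T] allI impI ballI)
    fix t z r assume t: "T \<le> t" and z: "z \<in> ball (m + t *\<^sub>R a) \<rho>" and r: "r \<in> A"
    have t0: "t \<ge> 0" using t by (simp add: T_def)
    have "(B * B + 4 * K * B) / (2 * \<delta>) < t" using t by (simp add: T_def)
    then have far: "2 * (\<delta> * t) > B * B + 4 * (K * B)" using \<delta> by (simp add: field_simps)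
    have zK: "norm (z - t *\<^sub>R a) \<le> K"
      using z norm_triangle_ineq[of m "z - (m + t *\<^sub>R a)"] by (simp add: K_def dist_norm norm_minus_commute)
    have "(z - t *\<^sub>R a) \<bullet> (r - q0) \<le> norm (z - t *\<^sub>R a) * norm (r - q0)" by (rule norm_cauchy_schwarz)
    also have "\<dots> \<le> K * (2 * B)"
      using B r norm_triangle_ineq4[of r q0] zK order_trans[OF norm_ge_zero zK] by (intro mult_mono) auto
    finally have lin: "(z - t *\<^sub>R a) \<bullet> (r - q0) \<le> 2 * (K * B)" by simp
    have ray: "t * (a \<bullet> r - a \<bullet> q0) \<le> - (\<delta> * t)"
      using mult_left_mono[OF _ t0, of "a \<bullet> r - a \<bullet> q0" "-\<delta>"] assms(2) r by (simp add: \<delta>_def algebra_simps)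
    have "q0 \<bullet> q0 \<le> B * B"
      using B by (metis mult_mono norm_ge_zero power2_eq_square power2_norm_eq_inner)
    moreover have "z \<bullet> (r - q0) = (z - t *\<^sub>R a) \<bullet> (r - q0) + t * (a \<bullet> r - a \<bullet> q0)"
      by (simp add: inner_diff_left inner_diff_right algebra_simps)
    ultimately have "(dist z r)^2 - (dist z q0)^2 > 0"
      unfolding dist_sq_diff using lin ray far inner_ge_zero[of r] by linarith
    then show "dist z q0 < dist z r" by (simp add: power2_less_imp_less)
  qed
qed

lemma infdist_segment_endpoint:
  fixes y p p' :: "'a::euclidean_space"
  assumes "(y - p) \<bullet> (p' - p) \<le> 0"
  shows "infdist y (closed_segment p p') = dist y p"
proof (rule antisym)
  show "infdist y (closed_segment p p') \<le> dist y p" by (rule infdist_le) simp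
  obtain r where r: "r \<in> closed_segment p p'" "infdist y (closed_segment p p') = dist y r"
    using infdist_attains_inf[of "closed_segment p p'" y] by auto
  obtain l where l: "0 \<le> l" "l \<le> 1" "r = (1 - l) *\<^sub>R p + l *\<^sub>R p'"
    using r(1) by (auto simp: in_segment)
  have rr: "y - r = (y - p) - l *\<^sub>R (p' - p)" using l(3) by (simp add: algebra_simps)
  have "(dist y r)^2 = (dist y p)^2 - 2 * l * ((y - p) \<bullet> (p' - p)) + l^2 * ((p' - p) \<bullet> (p' - p))"
    unfolding dist_norm power2_norm_eq_inner rr
    by (simp add: inner_diff_left inner_diff_right inner_commute algebra_simps power2_eq_square)
  moreover have "l * ((y - p) \<bullet> (p' - p)) \<le> 0" using l(1) assms by (simp add: mult_nonneg_nonpos)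
  moreover have "l^2 * ((p' - p) \<bullet> (p' - p)) \<ge> 0" by simp
  ultimately have "(dist y p)^2 \<le> (dist y r)^2" by linarith
  then have "dist y p \<le> dist y r" by (rule power2_le_imp_le) simp
  then show "dist y p \<le> infdist y (closed_segment p p')" using r by simp
qed

lemma eventually_nearest_endpoint:
  fixes a m p p' :: "'a::euclidean_space"
  assumes "a \<bullet> p' < a \<bullet> p"
  shows "eventually (\<lambda>t. \<forall>z\<in>ball (m + t *\<^sub>R a) \<rho>. infdist z (closed_segment p p') = dist z p) at_top"
proof -
  define e where "e = p' - p"
  have ae: "a \<bullet> e < 0" using assms by (simp add: e_def inner_diff_right)
  define K where "K = (norm (m - p) + \<rho>) * norm e"
  define T where "T = max 0 (K / (- (a \<bullet> e))) + 1"
  show ?thesis unfolding eventually_at_top_linorder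
  proof (intro exI[of _ T] allI impI ballI)
    fix t z assume t: "T \<le> t" and z: "z \<in> ball (m + t *\<^sub>R a) \<rho>"
    have "(z - t *\<^sub>R a - p) \<bullet> e \<le> norm (z - t *\<^sub>R a - p) * norm e" by (rule norm_cauchy_schwarz)
    also have "\<dots> \<le> K" unfolding K_def
      using z norm_triangle_ineq[of "m - p" "z - (m + t *\<^sub>R a)"]
      by (intro mult_right_mono) (auto simp: dist_norm norm_minus_commute algebra_simps)
    finally have 1: "(z - t *\<^sub>R a - p) \<bullet> e \<le> K" .
    have "K / (- (a \<bullet> e)) < t" using t by (simp add: T_def)
    then have 2: "t * (a \<bullet> e) \<le> - K" using ae by (simp add: field_simps)
    have "(z - p) \<bullet> e = (z - t *\<^sub>R a - p) \<bullet> e + t * (a \<bullet> e)"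
      by (simp add: inner_diff_left algebra_simps)
    then have "(z - p) \<bullet> (p' - p) \<le> 0" using 1 2 unfolding e_def by linarith
    then show "infdist z (closed_segment p p') = dist z p" by (rule infdist_segment_endpoint)
  qed
qed

(* Near such points the two regions are separated by the bisector of
   p and q. *)
definition local_bisector ::
  "point set set \<Rightarrow> point set set \<Rightarrow> point set \<Rightarrow> point set \<Rightarrow> point \<Rightarrow> point \<Rightarrow> point \<Rightarrow> bool" where
  "local_bisector S H s1 s2 p q y \<longleftrightarrow> infdist y s1 = dist y p \<and> infdist y s2 = dist y q \<and>
     (\<forall>s\<in>H. infdist y s < dist y p \<and> infdist y s < dist y q) \<and>
     (\<forall>t\<in>S - H - {s1, s2}. dist y p < infdist y t \<and> dist y q < infdist y t)"

lemma local_bisector_sym: "local_bisector S H s1 s2 p q y \<longleftrightarrow> local_bisector S H s2 s1 q p y"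
  unfolding local_bisector_def insert_commute[of s1 s2] by blast

lemma local_bisector_in_region:
  assumes "local_bisector S H s1 s2 p q y" "dist y p < dist y q" "s2 \<in> S - H" "s1 \<noteq> s2"
  shows "y \<in> voronoi_region (insert s1 H) S"
  unfolding voronoi_region_def segdist_def
proof (intro CollectI ballI)
  fix s t assume s: "s \<in> insert s1 H" and t: "t \<in> S - insert s1 H"
  have closer: "infdist y s \<le> dist y p" and strict: "s \<in> H \<Longrightarrow> infdist y s < dist y q"
    using assms(1) s unfolding local_bisector_def by (auto intro: less_imp_le)
  show "infdist y s < infdist y t"
  proof (cases "t = s2")
    case True
    then show ?thesis using assms s closer strict unfolding local_bisector_def by (cases "s = s1") auto
  next
    case False
    then have "t \<in> S - H - {s1, s2}" using t by auto
    then show ?thesis using assms(1) closer unfolding local_bisector_def by force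
  qed
qed

(* A point of the bisector of p and q inside a local bisector configuration
   is approximated by points closer to p, hence lies in the closure of the
   region of  insert s1 H. *)
lemma local_bisector_closure:
  fixes x y p q :: "real^2"
  assumes loc: "\<forall>z\<in>ball x 2. local_bisector S H s1 s2 p q z"
    and y: "y \<in> ball x 1" and eq: "dist y p = dist y q" and pq: "p \<noteq> q"
    and s2: "s2 \<in> S - H" and ne: "s1 \<noteq> s2"
  shows "y \<in> closure (voronoi_region (insert s1 H) S)"
  unfolding closure_approachable
proof (intro allI impI)
  fix e :: real assume e: "e > 0"
  define d where "d = p - q"
  have nd: "norm d > 0" using pq by (simp add: d_def)
  define \<epsilon> where "\<epsilon> = min e 1 / (2 * norm d)"
  have \<epsilon>: "\<epsilon> > 0" using e nd by (simp add: \<epsilon>_def)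
  define z where "z = y + \<epsilon> *\<^sub>R d"
  have dz: "dist z y = min e 1 / 2" using nd \<epsilon> e by (simp add: z_def dist_norm \<epsilon>_def)
  then have "z \<in> ball x 2" using y dist_triangle[of x z y] by (simp add: dist_commute)
  then have loc_z: "local_bisector S H s1 s2 p q z" using loc by auto
  have "(dist z p)^2 - (dist z q)^2 = ((dist y p)^2 - (dist y q)^2) - 2 * \<epsilon> * (d \<bullet> d)"
    unfolding dist_sq_diff d_def[symmetric] z_def by (simp add: inner_add_left algebra_simps)
  moreover have "2 * \<epsilon> * (d \<bullet> d) > 0" using nd \<epsilon> by simp
  ultimately have "(dist z p)^2 < (dist z q)^2" using eq by simp
  then have "dist z p < dist z q" by (rule power2_less_imp_less) simp
  then have "z \<in> voronoi_region (insert s1 H) S" using local_bisector_in_region[OF loc_z] s2 ne by blast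
  moreover have "dist z y < e" using dz e by linarith
  ultimately show "\<exists>z\<in>voronoi_region (insert s1 H) S. dist z y < e" by blast
qed

lemma local_bisector_edge_point:
  fixes x p q :: "real^2"
  assumes loc: "\<forall>z\<in>ball x 2. local_bisector S H s1 s2 p q z"
    and eq: "dist x p = dist x q" and pq: "p \<noteq> q"
    and s1: "s1 \<in> S - H" and s2: "s2 \<in> S - H" and ne: "s1 \<noteq> s2"
  shows "x \<in> edge_points (voronoi_region (insert s1 H) S) (voronoi_region (insert s2 H) S)"
proof -
  define R1 where "R1 = voronoi_region (insert s1 H) S"
  define R2 where "R2 = voronoi_region (insert s2 H) S"
  have loc': "\<forall>z\<in>ball x 2. local_bisector S H s2 s1 q p z" using loc local_bisector_sym by blast
  have cl1: "y \<in> closure R1" and cl2: "y \<in> closure R2"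
    if "y \<in> ball x 1" "dist y p = dist y q" for y
    using local_bisector_closure[OF loc that pq s2 ne] local_bisector_closure[OF loc' that(1)
        that(2)[symmetric] pq[symmetric] s1 ne[symmetric]]
    by (simp_all add: R1_def R2_def)
  have "ball x 1 \<subseteq> closure R1 \<union> closure R2"
  proof
    fix y assume y: "y \<in> ball x 1"
    then have "y \<in> ball x 2" by simp
    consider "dist y p < dist y q" | "dist y q < dist y p" | "dist y p = dist y q" by linarith
    then show "y \<in> closure R1 \<union> closure R2"
    proof cases
      case 1
      then have "y \<in> R1" using local_bisector_in_region[OF _ 1 s2 ne] loc \<open>y \<in> ball x 2\<close> unfolding R1_def by blast
      then show ?thesis using closure_subset by blast
    next
      case 2
      then have "y \<in> R2" using local_bisector_in_region[OF _ 2 s1 ne[symmetric]] loc' \<open>y \<in> ball x 2\<close> unfolding R2_def by blast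
      then show ?thesis using closure_subset by blast
    next
      case 3
      then show ?thesis using cl1 y by blast
    qed
  qed
  then show ?thesis
    unfolding edge_points_def R1_def[symmetric] R2_def[symmetric]
    using cl1[of x] cl2[of x] eq by (intro CollectI conjI exI[of _ 1]) auto
qed

lemma ray_unbounded:
  fixes m a :: "'a::real_normed_vector"
  assumes "a \<noteq> 0"
  shows "\<not> bounded ((\<lambda>t. m + t *\<^sub>R a) ` {T0..})"
proof
  assume "bounded ((\<lambda>t. m + t *\<^sub>R a) ` {T0..})"
  then obtain B where B: "\<forall>t\<ge>T0. norm (m + t *\<^sub>R a) \<le> B" unfolding bounded_iff by auto
  define t where "t = max T0 ((B + norm m + 1) / norm a)"
  have na: "norm a > 0" using assms by simp
  have 1: "norm (m + t *\<^sub>R a) \<le> B" using B by (simp add: t_def)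
  then have "B \<ge> 0" using norm_ge_zero order_trans by blast
  have t_ge: "t \<ge> (B + norm m + 1) / norm a" by (simp add: t_def)
  moreover have "(B + norm m + 1) / norm a \<ge> 0" using \<open>B \<ge> 0\<close> na by simp
  ultimately have "t \<ge> 0" by linarith
  moreover have "t * norm a \<ge> B + norm m + 1" using t_ge na by (simp add: field_simps)
  moreover have "norm (t *\<^sub>R a) \<le> norm (m + t *\<^sub>R a) + norm m"
    using norm_triangle_ineq4[of "m + t *\<^sub>R a" m] by simp
  ultimately show False using 1 by simp
qed

lemma ray_imp_unbounded_edge:
  fixes m a :: point
  assumes "a \<noteq> 0" "\<forall>t\<ge>T0. m + t *\<^sub>R a \<in> edge_points R1 R2"
  shows "has_unbounded_edge R1 R2"
proof -
  define ray where "ray = (\<lambda>t. m + t *\<^sub>R a) ` {T0..}"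
  have ray_edge: "ray \<subseteq> edge_points R1 R2" using assms(2) by (auto simp: ray_def)
  have "connected ray" unfolding ray_def
    by (intro connected_continuous_image continuous_intros) simp
  moreover have start: "m + T0 *\<^sub>R a \<in> ray" unfolding ray_def by (rule imageI) simp
  ultimately have "ray \<subseteq> connected_component_set (edge_points R1 R2) (m + T0 *\<^sub>R a)"
    using ray_edge by (intro connected_component_maximal)
  moreover have "connected_component_set (edge_points R1 R2) (m + T0 *\<^sub>R a) \<in> components (edge_points R1 R2)"
    using ray_edge start by (intro componentsI) blast
  ultimately show ?thesis
    unfolding has_unbounded_edge_def using ray_unbounded[OF assms(1)] bounded_subset ray_def by blast
qed

lemma eventually_local_bisector:
  fixes a p p' q q' m :: point
  assumes fin: "finite S" and pds: "pairwise_disjoint_segments S" and HS: "H \<subseteq> S"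
    and s1: "s1 = closed_segment p p'" and s2: "s2 = closed_segment q q'"
    and ap: "a \<bullet> p = b" and aq: "a \<bullet> q = b" and ap': "a \<bullet> p' < b" and aq': "a \<bullet> q' < b"
    and above: "\<forall>s\<in>H. \<exists>x\<in>s. b < a \<bullet> x"
    and below: "\<forall>t\<in>S - H - {s1, s2}. support t a < b"
  shows "eventually (\<lambda>t. \<forall>z\<in>ball (m + t *\<^sub>R a) \<rho>. local_bisector S H s1 s2 p q z) at_top"
proof -
  note seg = pairwise_disjoint_segmentsD(1)[OF pds]
  define Oth where "Oth = S - H - {s1, s2}"
  have Oth: "finite Oth" "\<And>t. t \<in> Oth \<Longrightarrow> is_segment t" using fin seg by (auto simp: Oth_def)
  have bounded_Oth: "bounded t" if "t \<in> Oth" for t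
    using segment_compact_nonempty[OF Oth(2)[OF that]] compact_imp_bounded by blast
  obtain f where f: "\<forall>s\<in>H. f s \<in> s \<and> b < a \<bullet> f s" using above by metis
  have ev_s1: "eventually (\<lambda>t. \<forall>z\<in>ball (m + t *\<^sub>R a) \<rho>. infdist z s1 = dist z p) at_top"
    unfolding s1 by (rule eventually_nearest_endpoint) (use ap ap' in simp)
  have ev_s2: "eventually (\<lambda>t. \<forall>z\<in>ball (m + t *\<^sub>R a) \<rho>. infdist z s2 = dist z q) at_top"
    unfolding s2 by (rule eventually_nearest_endpoint) (use aq aq' in simp)
  have ev_H: "eventually (\<lambda>t. \<forall>s\<in>H. \<forall>z\<in>ball (m + t *\<^sub>R a) \<rho>. \<forall>r\<in>{p, q}. dist z (f s) < dist z r) at_top"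
    using fin HS finite_subset f ap aq
    by (intro eventually_ball_finite ballI eventually_closer_along_ray[where c = b]) auto
  have ev_Oth: "eventually (\<lambda>t. \<forall>u\<in>Oth. \<forall>x\<in>{p, q}. \<forall>z\<in>ball (m + t *\<^sub>R a) \<rho>. \<forall>r\<in>u. dist z x < dist z r) at_top"
    using Oth(1) below ap aq support_upper[OF Oth(2)] bounded_Oth
    by (intro eventually_ball_finite ballI eventually_closer_along_ray[where c = "support _ a"])
      (auto simp: Oth_def)
  show ?thesis
    using ev_s1 ev_s2 ev_H ev_Oth
  proof eventually_elim
    case (elim t)
    show ?case
    proof (intro ballI)
      fix z assume z: "z \<in> ball (m + t *\<^sub>R a) \<rho>"
      have "infdist z s < dist z p \<and> infdist z s < dist z q" if "s \<in> H" for s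
        using elim(3) f infdist_le[of "f s" s z] that z by fastforce
      moreover have "dist z p < infdist z u \<and> dist z q < infdist z u" if u: "u \<in> Oth" for u
      proof -
        obtain r where "r \<in> u" "infdist z u = dist z r"
          using segment_compact_nonempty[OF Oth(2)[OF u]] infdist_attains_inf[of u z] compact_imp_closed by metis
        then show ?thesis using elim(4) u z by auto
      qed
      ultimately show "local_bisector S H s1 s2 p q z"
        using elim(1,2) z unfolding local_bisector_def Oth_def by blast
    qed
  qed
qed

lemma dist_midpoint_ray:
  fixes a p q :: "'a::real_inner"
  assumes "a \<bullet> p = a \<bullet> q"
  shows "dist (midpoint p q + t *\<^sub>R a) p = dist (midpoint p q + t *\<^sub>R a) q"
proof -
  have "(dist (midpoint p q + t *\<^sub>R a) p)^2 = (dist (midpoint p q + t *\<^sub>R a) q)^2"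
    using assms dist_sq_diff[of "midpoint p q + t *\<^sub>R a" p q]
    by (simp add: midpoint_def inner_add_left inner_diff_right inner_commute algebra_simps)
  then show ?thesis by (simp add: power2_eq_iff_nonneg)
qed

(* Normal form of a supporting halfplane {x. b < a . x}: it touches s1 = [p,p']
   and s2 = [q,q'] exactly at p and q; by general position all other
   endpoints of segments outside H lie strictly below the boundary line. *)
lemma supporting_halfplane_normal_form:
  assumes pds: "pairwise_disjoint_segments S" and gp: "general_position S"
    and s1: "s1 \<in> S - H" and s2: "s2 \<in> S - H" and ne: "s1 \<noteq> s2"
    and sh: "supporting_halfplane S H s1 s2 h"
  obtains a b p p' q q' where "a \<noteq> 0" "p \<noteq> q"
    "s1 = closed_segment p p'" "s2 = closed_segment q q'"
    "a \<bullet> p = b" "a \<bullet> q = b" "a \<bullet> p' < b" "a \<bullet> q' < b"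
    "\<forall>s\<in>H. \<exists>x\<in>s. b < a \<bullet> x" "\<forall>t\<in>S - H - {s1, s2}. support t a < b"
proof -
  note seg = pairwise_disjoint_segmentsD(1)[OF pds] and disj = pairwise_disjoint_segmentsD(2)[OF pds]
  from sh obtain a b p q where a0: "a \<noteq> 0" and h: "h = {x. b < a \<bullet> x}"
    and p: "p \<in> endpoints s1" "a \<bullet> p = b" and q: "q \<in> endpoints s2" "a \<bullet> q = b"
    and meets_H: "\<forall>s\<in>H. h \<inter> s \<noteq> {}" and misses: "\<forall>t\<in>S - H. h \<inter> t = {}"
    unfolding supporting_halfplane_def by blast
  have d12: "s1 \<inter> s2 = {}" using disj s1 s2 ne by blast
  have ps1: "p \<in> s1" and qs2: "q \<in> s2" using p q endpoint_in_segment by blast+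
  then have pq: "p \<noteq> q" using d12 by blast
  have pS: "p \<in> \<Union>(endpoints ` S)" and qS: "q \<in> \<Union>(endpoints ` S)" using p q s1 s2 by blast+
  have strictly_below: "a \<bullet> e < b" if t: "t \<in> S - H" and e: "e \<in> endpoints t" "e \<noteq> p" "e \<noteq> q" for t e
  proof -
    have "e \<notin> h" using misses t endpoint_in_segment[OF e(1)] by blast
    moreover have "e \<in> \<Union>(endpoints ` S)" using t e(1) by blast
    then have "a \<bullet> e \<noteq> b" using general_position_line[OF gp a0 pS qS _ pq e(2,3) p(2) q(2)] by blast
    ultimately show ?thesis using h by auto
  qed
  obtain p' where p': "p' \<in> endpoints s1" "p' \<noteq> p" "s1 = closed_segment p p'"
    using endpoints_other[OF p(1)] by blast
  obtain q' where q': "q' \<in> endpoints s2" "q' \<noteq> q" "s2 = closed_segment q q'"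
    using endpoints_other[OF q(1)] by blast
  have "p' \<noteq> q" "q' \<noteq> p" using p'(1) q'(1) ps1 qs2 endpoint_in_segment d12 by blast+
  then have ap': "a \<bullet> p' < b" and aq': "a \<bullet> q' < b"
    using strictly_below[OF s1 p'(1)] strictly_below[OF s2 q'(1)] p'(2) q'(2) by auto
  have below: "\<forall>t\<in>S - H - {s1, s2}. support t a < b"
  proof
    fix t assume t: "t \<in> S - H - {s1, s2}"
    obtain e where e: "e \<in> endpoints t" "a \<bullet> e = support t a" using support_attained[OF seg] t by blast
    have "t \<inter> s1 = {}" "t \<inter> s2 = {}" using disj t s1 s2 by auto
    then have "e \<noteq> p" "e \<noteq> q" using e(1) endpoint_in_segment ps1 qs2 by blast+
    then show "support t a < b" using strictly_below[of t e] t e by simp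
  qed
  have "\<forall>s\<in>H. \<exists>x\<in>s. b < a \<bullet> x" using meets_H h by blast
  from that[OF a0 pq p'(3) q'(3) p(2) q(2) ap' aq' this below] show ?thesis .
qed

lemma supporting_halfplane_imp_unbounded_edge:
  assumes fin: "finite S" and pds: "pairwise_disjoint_segments S" and gp: "general_position S"
    and HS: "H \<subseteq> S" and s1: "s1 \<in> S - H" and s2: "s2 \<in> S - H" and ne: "s1 \<noteq> s2"
    and sh: "supporting_halfplane S H s1 s2 h"
  shows "has_unbounded_edge (voronoi_region (insert s1 H) S) (voronoi_region (insert s2 H) S)"
proof -
  obtain a b p p' q q' where a0: "a \<noteq> 0" and pq: "p \<noteq> q"
    and s1_pp': "s1 = closed_segment p p'" and s2_qq': "s2 = closed_segment q q'"
    and ap: "a \<bullet> p = b" and aq: "a \<bullet> q = b" and ap': "a \<bullet> p' < b" and aq': "a \<bullet> q' < b"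
    and above: "\<forall>s\<in>H. \<exists>x\<in>s. b < a \<bullet> x" and below: "\<forall>t\<in>S - H - {s1, s2}. support t a < b"
    by (rule supporting_halfplane_normal_form[OF pds gp s1 s2 ne sh])
  from eventually_local_bisector[OF fin pds HS s1_pp' s2_qq' ap aq ap' aq' above below]
  obtain T0 where T0: "\<forall>t\<ge>T0. \<forall>z\<in>ball (midpoint p q + t *\<^sub>R a) 2. local_bisector S H s1 s2 p q z"
    unfolding eventually_at_top_linorder by blast
  have "a \<bullet> p = a \<bullet> q" using ap aq by simp
  then have "midpoint p q + t *\<^sub>R a \<in>
      edge_points (voronoi_region (insert s1 H) S) (voronoi_region (insert s2 H) S)" if "t \<ge> T0" for t
    using local_bisector_edge_point[OF _ dist_midpoint_ray pq s1 s2 ne] T0 that by blast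
  then show ?thesis using ray_imp_unbounded_edge[OF a0] by blast
qed

theorem corollary1:
  fixes S H :: "(real^2) set set" and s1 s2 :: "(real^2) set"
  assumes "finite S"
    and "pairwise_disjoint_segments S"
    and "general_position S"
    and "H \<subseteq> S"
    and "s1 \<in> S - H" and "s2 \<in> S - H" and "s1 \<noteq> s2"
  shows "has_unbounded_edge (voronoi_region (insert s1 H) S) (voronoi_region (insert s2 H) S)
     \<longleftrightarrow> (\<exists>h. supporting_halfplane S H s1 s2 h)"
  using unbounded_edge_imp_supporting_halfplane[OF assms]
    supporting_halfplane_imp_unbounded_edge[OF assms] by blast

end
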